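(* Let $\Upsilon$ be a $\delta$--hyperbolic geodesic metric space and let $m,\epsilon>0$ and $c\ge 0$ be real numbers. There exists a constant $\epsilon'$ such that for any finite or countably infinite collection of subsets $\{X_i\}_{i=1}^{\Lambda}$ of $\Upsilon$ satisfying (1) each $X_i$ is $\epsilon$--quasi-convex; (2) $X_i\cap X_{i+1}\neq\emptyset$ for each $i$; (3) for all $i,j$ and all $x\in X_i$, $y\in X_j$, $d(x,y)\ge m(|i-j|-c)$, the union $\bigcup_i X_i$ is $\epsilon'$--quasi-convex.
   Context: $\delta$--hyperbolic means geodesic triangles are $\delta$--slim. A subset $Z$ is $\epsilon$--quasi-convex if every geodesic joining two points of $Z$ lies in the $\epsilon$--neighborhood of $Z$. The constant $\epsilon'$ depends only on $\delta,m,\epsilon,c$, not on the collection. *)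

theory Defs
  imports "HOL-Analysis.Analysis"
begin

definition geodesic_segment_between :: "'a::metric_space set \<Rightarrow> 'a \<Rightarrow> 'a \<Rightarrow> bool" where
  "geodesic_segment_between G x y \<longleftrightarrow>
     (\<exists>\<gamma>::real \<Rightarrow> 'a. \<gamma> 0 = x \<and> \<gamma> (dist x y) = y
        \<and> (\<forall>s\<in>{0..dist x y}. \<forall>t\<in>{0..dist x y}. dist (\<gamma> s) (\<gamma> t) = \<bar>s - t\<bar>)
        \<and> G = \<gamma> ` {0..dist x y})"

definition geodesic_space :: "'a::metric_space itself \<Rightarrow> bool" where
  "geodesic_space _ \<longleftrightarrow> (\<forall>x y::'a. \<exists>G. geodesic_segment_between G x y)"

definition nbhd :: "real \<Rightarrow> 'a::metric_space set \<Rightarrow> 'a set" where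
  "nbhd r A = {p. \<exists>q\<in>A. dist p q \<le> r}"

definition hyperbolic :: "real \<Rightarrow> 'a::metric_space itself \<Rightarrow> bool" where
  "hyperbolic \<delta> _ \<longleftrightarrow> (\<forall>x y z::'a. \<forall>Gxy Gyz Gxz.
      geodesic_segment_between Gxy x y \<and> geodesic_segment_between Gyz y z
      \<and> geodesic_segment_between Gxz x z \<longrightarrow> Gxy \<subseteq> nbhd \<delta> (Gyz \<union> Gxz))"

definition quasi_convex :: "real \<Rightarrow> 'a::metric_space set \<Rightarrow> bool" where
  "quasi_convex \<epsilon> Z \<longleftrightarrow> (\<forall>x\<in>Z. \<forall>y\<in>Z. \<forall>G. geodesic_segment_between G x y \<longrightarrow> G \<subseteq> nbhd \<epsilon> Z)"

end

theory Submission
  imports Defs "HOL-Real_Asymp.Real_Asymp"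
begin

(* A chain of fewer than 2^L consecutive sets is (\<epsilon> + L\<delta>)-quasi-convex: split it into two
   halves sharing a point p and use that a geodesic [x,y] is \<delta>-close to [x,p] \<union> [p,y].
   For a long chain, take z on a geodesic [x,y] with x \<in> X a, y \<in> X b, and let t be the first
   index such that [x,p] passes \<delta>-close to z for some p \<in> X t.  If t < a + 2^L the short case
   applies to [x,p].  Otherwise put s = t - 2^L and pick q \<in> X s \<inter> X (s+1).  Three slim
   triangles place z within 2\<delta> of [q,p], which lies over a short chain, unless [x,q] and [p,y]
   come within 2K + 4\<delta> of each other.  By induction on b - a these two geodesics are K-close
   to the parts of the chain indexed up to s and from t on, which separation keeps
   m(2^L - c) apart; since 2^L outgrows L\<delta>, a large L makes this exceed 2K + 4\<delta>,
   where K = \<epsilon> + L\<delta> + 2\<delta>. *)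

lemma geodesic_segment_between_reverse:
  assumes "geodesic_segment_between G x y"
  shows "geodesic_segment_between G y x"
proof -
  define d where "d = dist x y"
  from assms obtain \<gamma> where \<gamma>: "\<gamma> 0 = x" "\<gamma> d = y"
    "\<forall>s\<in>{0..d}. \<forall>t\<in>{0..d}. dist (\<gamma> s) (\<gamma> t) = \<bar>s - t\<bar>" "G = \<gamma> ` {0..d}"
    unfolding geodesic_segment_between_def d_def by blast
  define \<gamma>' where "\<gamma>' = (\<lambda>s. \<gamma> (d - s))"
  have "G = \<gamma>' ` {0..d}"
    using \<gamma>(4) image_image[of \<gamma> "(-) d" "{0..d}"] by (simp add: \<gamma>'_def)
  moreover have "\<forall>s\<in>{0..d}. \<forall>t\<in>{0..d}. dist (\<gamma>' s) (\<gamma>' t) = \<bar>s - t\<bar>"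
    using \<gamma>(3) by (auto simp: \<gamma>'_def abs_minus_commute)
  moreover have "\<gamma>' 0 = y" "\<gamma>' (dist y x) = x"
    using \<gamma> by (simp_all add: \<gamma>'_def d_def dist_commute)
  ultimately show ?thesis
    unfolding geodesic_segment_between_def by (metis d_def dist_commute)
qed

lemma geodesic_segment_between_commute:
  "geodesic_segment_between G x y \<longleftrightarrow> geodesic_segment_between G y x"
  using geodesic_segment_between_reverse by blast

lemma geodesic_segment_between_same:
  "geodesic_segment_between G x x \<Longrightarrow> G = {x}"
  unfolding geodesic_segment_between_def by force

lemma nbhd_mono: "r \<le> s \<Longrightarrow> A \<subseteq> B \<Longrightarrow> nbhd r A \<subseteq> nbhd s B"
  unfolding nbhd_def by force

lemma nbhd_dist_trans: "w \<in> nbhd r A \<Longrightarrow> dist z w \<le> s \<Longrightarrow> z \<in> nbhd (s + r) A"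
  unfolding nbhd_def by (smt (verit, best) dist_triangle mem_Collect_eq)

lemma nbhd_nbhd: "nbhd s (nbhd r A) \<subseteq> nbhd (s + r) A"
  using nbhd_dist_trans unfolding nbhd_def by blast

lemma quasi_convex_mono: "r \<le> s \<Longrightarrow> quasi_convex r A \<Longrightarrow> quasi_convex s A"
  unfolding quasi_convex_def by (meson nbhd_mono order.trans order_refl)

lemma ex_least_nat_between:
  fixes a b :: nat
  assumes "P b" and "a \<le> b"
  obtains t where "a \<le> t" "t \<le> b" "P t" "\<And>s. a \<le> s \<Longrightarrow> s < t \<Longrightarrow> \<not> P s"
proof -
  obtain t where t: "a \<le> t" "P t" and least: "\<And>s. s < t \<Longrightarrow> \<not> (a \<le> s \<and> P s)"
    using exists_least_iff[of "\<lambda>t. a \<le> t \<and> P t"] assms by blast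
  have "t \<le> b"
    using least[of b] assms by force
  then show thesis
    using that t least by blast
qed

lemma ex_power_of_two_dominates_linear:
  fixes m c A B :: real
  assumes "m > 0"
  shows "\<exists>L::nat. A + B * L < m * (2 ^ L - c)"
proof -
  have "filterlim (\<lambda>L::nat. m * (2 ^ L - c) - B * L) at_top sequentially"
    using assms by real_asymp
  then have "\<forall>\<^sub>F L in sequentially. A < m * (2 ^ L - c) - B * L"
    by (simp add: filterlim_at_top_dense)
  then show ?thesis
    by (metis (lifting) eventually_sequentially less_diff_eq order.refl)
qed

definition quasi_convex_chain :: "real \<Rightarrow> (nat \<Rightarrow> 'a::metric_space set) \<Rightarrow> nat set \<Rightarrow> bool" where
  "quasi_convex_chain \<epsilon> X J \<longleftrightarrow>
     (\<forall>i\<in>J. quasi_convex \<epsilon> (X i)) \<and> (\<forall>i. i \<in> J \<longrightarrow> Suc i \<in> J \<longrightarrow> X i \<inter> X (Suc i) \<noteq> {})"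

definition separated_chain :: "real \<Rightarrow> real \<Rightarrow> (nat \<Rightarrow> 'a::metric_space set) \<Rightarrow> nat set \<Rightarrow> bool" where
  "separated_chain m c X J \<longleftrightarrow>
     (\<forall>i\<in>J. \<forall>j\<in>J. \<forall>x\<in>X i. \<forall>y\<in>X j. m * (\<bar>real i - real j\<bar> - c) \<le> dist x y)"

lemma quasi_convex_chain_subset:
  "quasi_convex_chain \<epsilon> X J \<Longrightarrow> J' \<subseteq> J \<Longrightarrow> quasi_convex_chain \<epsilon> X J'"
  unfolding quasi_convex_chain_def by blast

lemma separated_chain_far:
  assumes "separated_chain m c X J" "m \<ge> 0" "i \<in> J" "j \<in> J" "i + n \<le> j" "x \<in> X i" "y \<in> X j"
  shows "m * (real n - c) \<le> dist x y"
proof -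
  have "m * (real n - c) \<le> m * (\<bar>real i - real j\<bar> - c)"
    using assms(2,5) by (intro mult_left_mono) auto
  also have "\<dots> \<le> dist x y"
    using assms unfolding separated_chain_def by blast
  finally show ?thesis .
qed

definition some_geodesic :: "'a::metric_space \<Rightarrow> 'a \<Rightarrow> 'a set" where
  "some_geodesic x y = (SOME G. geodesic_segment_between G x y)"

locale hyperbolic_geodesic_space =
  fixes \<delta> :: real and ty :: "'a::metric_space itself"
  assumes geodesic: "geodesic_space ty"
    and hyperbolic: "hyperbolic \<delta> ty"
begin

lemma geodesic_segment_some_geodesic: "geodesic_segment_between (some_geodesic x y) x (y::'a)"
  using geodesic someI_ex unfolding geodesic_space_def some_geodesic_def by metis

lemma slim_triangle:
  assumes "geodesic_segment_between G x y" "geodesic_segment_between H1 x w"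
    "geodesic_segment_between H2 w (y::'a)"
  shows "G \<subseteq> nbhd \<delta> (H1 \<union> H2)"
  using hyperbolic assms geodesic_segment_between_commute unfolding hyperbolic_def
  by metis

lemma delta_nonneg: "\<delta> \<ge> 0"
proof -
  fix x :: 'a
  have x: "geodesic_segment_between {x} x x"
    using geodesic_segment_some_geodesic geodesic_segment_between_same by metis
  then have "x \<in> nbhd \<delta> {x}"
    using slim_triangle[OF x x x] by simp
  then show ?thesis
    unfolding nbhd_def by auto
qed

lemma geodesic_near_some_geodesic_or_endpoint:
  assumes "geodesic_segment_between G x (y::'a)"
  shows "G \<subseteq> nbhd \<delta> (some_geodesic x y \<union> {y})"
proof -
  have "some_geodesic y y = {y}"
    by (rule geodesic_segment_between_same[OF geodesic_segment_some_geodesic])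
  then show ?thesis
    using slim_triangle[OF assms geodesic_segment_some_geodesic[of x y] geodesic_segment_some_geodesic[of y y]]
    by simp
qed

lemma quasi_convex_Un:
  assumes A: "quasi_convex r (A::'a set)" and B: "quasi_convex r B" and p: "p \<in> A \<inter> B"
  shows "quasi_convex (r + \<delta>) (A \<union> B)"
  unfolding quasi_convex_def
proof (intro ballI allI impI subsetI)
  fix x y G z
  assume x: "x \<in> A \<union> B" and y: "y \<in> A \<union> B" and G: "geodesic_segment_between G x y" and "z \<in> G"
  have to_p: "H \<subseteq> nbhd r (A \<union> B)" if "w \<in> A \<union> B" "geodesic_segment_between H w p" for w H
  proof -
    have "H \<subseteq> nbhd r A \<or> H \<subseteq> nbhd r B"
      using that A B p unfolding quasi_convex_def by blast
    then show ?thesis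
      using nbhd_mono[of r r A "A \<union> B"] nbhd_mono[of r r B "A \<union> B"] by auto
  qed
  have "some_geodesic x p \<union> some_geodesic p y \<subseteq> nbhd r (A \<union> B)"
    using to_p[OF x geodesic_segment_some_geodesic]
      to_p[OF y geodesic_segment_some_geodesic[of p y, THEN geodesic_segment_between_reverse]]
    by simp
  then have "z \<in> nbhd \<delta> (nbhd r (A \<union> B))"
    using slim_triangle[OF G geodesic_segment_some_geodesic geodesic_segment_some_geodesic] \<open>z \<in> G\<close>
      nbhd_mono[of \<delta> \<delta>] by blast
  then show "z \<in> nbhd (r + \<delta>) (A \<union> B)"
    using nbhd_nbhd by (metis add.commute subsetD)
qed

lemma quasi_convex_short_chain:
  assumes "quasi_convex_chain \<epsilon> X {a..b}" and "b < a + 2 ^ L"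
  shows "quasi_convex (\<epsilon> + L * \<delta>) (\<Union>s\<in>{a..b}. X s :: 'a set)"
  using assms
proof (induction L arbitrary: a b)
  case 0
  show ?case
  proof (cases "a \<le> b")
    case True
    then have "a = b"
      using "0.prems"(2) by simp
    moreover have "quasi_convex \<epsilon> (X a)"
      using "0.prems"(1) True unfolding quasi_convex_chain_def by simp
    ultimately show ?thesis
      by simp
  next
    case False
    then show ?thesis
      by (simp add: quasi_convex_def)
  qed
next
  case (Suc L)
  show ?case
  proof (cases "b < a + 2 ^ L")
    case True
    have "\<epsilon> + L * \<delta> \<le> \<epsilon> + Suc L * \<delta>"
      using delta_nonneg by (simp add: distrib_right)
    then show ?thesis
      using Suc.IH[OF Suc.prems(1) True] quasi_convex_mono by blast
  next
    case False
    define h where "h = a + 2 ^ L - 1"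
    have h: "a \<le> h" "h < b" "h < a + 2 ^ L" "b < Suc h + 2 ^ L"
      using False Suc.prems(2) by (auto simp: h_def)
    have "{a..b} = {a..h} \<union> {Suc h..b}"
      using h by auto
    then have split: "(\<Union>s\<in>{a..b}. X s) = (\<Union>s\<in>{a..h}. X s) \<union> (\<Union>s\<in>{Suc h..b}. X s)"
      by blast
    obtain p where "p \<in> X h \<inter> X (Suc h)"
      using Suc.prems(1) h unfolding quasi_convex_chain_def by force
    then have p: "p \<in> (\<Union>s\<in>{a..h}. X s) \<inter> (\<Union>s\<in>{Suc h..b}. X s)"
      using h by auto
    have "quasi_convex (\<epsilon> + L * \<delta>) (\<Union>s\<in>{a..h}. X s)"
      using Suc.IH[OF quasi_convex_chain_subset[OF Suc.prems(1)] h(3)] h by simp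
    moreover have "quasi_convex (\<epsilon> + L * \<delta>) (\<Union>s\<in>{Suc h..b}. X s)"
      using Suc.IH[OF quasi_convex_chain_subset[OF Suc.prems(1)] h(4)] h by simp
    ultimately have "quasi_convex (\<epsilon> + L * \<delta> + \<delta>) (\<Union>s\<in>{a..b}. X s)"
      using quasi_convex_Un[OF _ _ p] split by simp
    then show ?thesis
      by (simp add: algebra_simps)
  qed
qed

lemma near_middle_geodesic:
  fixes x y p q :: 'a
  assumes G: "geodesic_segment_between G x y" and "z \<in> G"
    and far_p: "z \<notin> nbhd \<delta> (some_geodesic x p)" and near_q: "z \<in> nbhd \<delta> (some_geodesic x q)"
    and middle: "some_geodesic p q \<subseteq> nbhd r A"
    and left: "some_geodesic x p \<subseteq> nbhd K B" and right: "some_geodesic q y \<subseteq> nbhd K C"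
    and apart: "\<And>u v. u \<in> B \<Longrightarrow> v \<in> C \<Longrightarrow> 2 * K + 4 * \<delta> < dist u v"
  shows "z \<in> nbhd (r + 2 * \<delta>) A"
proof (rule ccontr)
  assume z_far: "z \<notin> nbhd (r + 2 * \<delta>) A"
  have not_middle: "w \<notin> some_geodesic p q" if "dist z w \<le> 2 * \<delta>" for w
  proof
    assume "w \<in> some_geodesic p q"
    then have "z \<in> nbhd (2 * \<delta> + r) A"
      using middle nbhd_dist_trans[OF _ that] by blast
    with z_far show False
      by (simp add: add.commute)
  qed
  have "z \<in> nbhd \<delta> (some_geodesic x p \<union> some_geodesic p y)"
    using slim_triangle[OF G geodesic_segment_some_geodesic[of x p] geodesic_segment_some_geodesic[of p y]]
      \<open>z \<in> G\<close> by blast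
  then obtain b1 where b1: "b1 \<in> some_geodesic p y" "dist z b1 \<le> \<delta>"
    using far_p unfolding nbhd_def by blast
  obtain a1 where a1: "a1 \<in> some_geodesic x q" "dist z a1 \<le> \<delta>"
    using near_q unfolding nbhd_def by blast
  obtain a2 where a2: "a2 \<in> some_geodesic x p \<union> some_geodesic p q" "dist a1 a2 \<le> \<delta>"
    using slim_triangle[OF geodesic_segment_some_geodesic geodesic_segment_some_geodesic
        geodesic_segment_some_geodesic, of x q p] a1(1)
    unfolding nbhd_def by blast
  obtain b2 where b2: "b2 \<in> some_geodesic p q \<union> some_geodesic q y" "dist b1 b2 \<le> \<delta>"
    using slim_triangle[OF geodesic_segment_some_geodesic geodesic_segment_some_geodesic
        geodesic_segment_some_geodesic, of p y q] b1(1)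
    unfolding nbhd_def by blast
  have "dist z a2 \<le> 2 * \<delta>" "dist z b2 \<le> 2 * \<delta>"
    using a1(2) a2(2) b1(2) b2(2) dist_triangle[of z a2 a1] dist_triangle[of z b2 b1] by linarith+
  then have "a2 \<in> some_geodesic x p" "b2 \<in> some_geodesic q y"
    using a2(1) b2(1) not_middle by blast+
  then obtain u v where u: "u \<in> B" "dist a2 u \<le> K" and v: "v \<in> C" "dist b2 v \<le> K"
    using left right unfolding nbhd_def by blast
  have "dist u v \<le> dist a2 u + dist z a2 + dist z b2 + dist b2 v"
    using dist_triangle[of u v a2] dist_triangle[of a2 v z] dist_triangle[of z v b2]
    by (simp add: dist_commute)
  also have "\<dots> \<le> 2 * K + 4 * \<delta>"
    using u(2) v(2) \<open>dist z a2 \<le> 2 * \<delta>\<close> \<open>dist z b2 \<le> 2 * \<delta>\<close> by linarith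
  finally show False
    using apart[OF u(1) v(1)] by simp
qed

end

locale separated_quasi_convex_chain = hyperbolic_geodesic_space \<delta> ty
  for \<delta> :: real and ty :: "'a::metric_space itself" +
  fixes \<epsilon> m c :: real and L :: nat and J :: "nat set" and X :: "nat \<Rightarrow> 'a set"
  assumes chain: "quasi_convex_chain \<epsilon> X J"
    and separated: "separated_chain m c X J"
    and m_pos: "m > 0" and eps_nonneg: "\<epsilon> \<ge> 0"
    and L_large: "2 * (\<epsilon> + L * \<delta> + 2 * \<delta>) + 4 * \<delta> < m * (2 ^ L - c)"
begin

abbreviation block :: "nat \<Rightarrow> nat \<Rightarrow> 'a set" where
  "block i j \<equiv> \<Union>s\<in>{i..j}. X s"

lemma nbhd_block_mono:
  "a \<le> i \<Longrightarrow> j \<le> b \<Longrightarrow> r \<le> s \<Longrightarrow> nbhd r (block i j) \<subseteq> nbhd s (block a b)"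
  by (intro nbhd_mono UN_mono) auto

lemma quasi_convex_short_block:
  "{i..j} \<subseteq> J \<Longrightarrow> j < i + 2 ^ L \<Longrightarrow> quasi_convex (\<epsilon> + L * \<delta>) (block i j)"
  using quasi_convex_short_chain quasi_convex_chain_subset chain by blast

lemma geodesic_short_block:
  assumes "{i..j} \<subseteq> J" "j < i + 2 ^ L" "x \<in> block i j" "y \<in> block i j"
  shows "some_geodesic x y \<subseteq> nbhd (\<epsilon> + L * \<delta>) (block i j)"
  using quasi_convex_short_block[OF assms(1,2)] assms(3,4) geodesic_segment_some_geodesic
  unfolding quasi_convex_def by blast

lemma blocks_far_apart:
  assumes "{a..s} \<subseteq> J" "{t..b} \<subseteq> J" "s + 2 ^ L \<le> t" "u \<in> block a s" "v \<in> block t b"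
  shows "2 * (\<epsilon> + L * \<delta> + 2 * \<delta>) + 4 * \<delta> < dist u v"
proof -
  obtain i j where i: "i \<in> {a..s}" "u \<in> X i" and j: "j \<in> {t..b}" "v \<in> X j"
    using assms(4,5) by blast
  have ij: "i \<in> J" "j \<in> J" "i + 2 ^ L \<le> j"
    using i(1) j(1) assms(1-3) by auto
  have "m * (real (2 ^ L) - c) \<le> dist u v"
    using separated_chain_far[OF separated _ ij i(2) j(2)] m_pos by simp
  then show ?thesis
    using L_large by simp
qed

lemma near_block_from_first_index:
  assumes J: "{a..b} \<subseteq> J" and x: "x \<in> X a" and y: "y \<in> X b"
    and G: "geodesic_segment_between G x y" and "z \<in> G"
    and t: "a \<le> t" "t \<le> b" "p \<in> X t" "z \<in> nbhd \<delta> (some_geodesic x p)"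
    and first: "\<And>s q. a \<le> s \<Longrightarrow> s < t \<Longrightarrow> q \<in> X s \<Longrightarrow> z \<notin> nbhd \<delta> (some_geodesic x q)"
    and shorter: "\<And>i j q q'. a \<le> i \<Longrightarrow> i \<le> j \<Longrightarrow> j \<le> b \<Longrightarrow> j - i < b - a \<Longrightarrow>
      q \<in> X i \<Longrightarrow> q' \<in> X j \<Longrightarrow> some_geodesic q q' \<subseteq> nbhd (\<epsilon> + L * \<delta> + 2 * \<delta>) (block i j)"
  shows "z \<in> nbhd (\<epsilon> + L * \<delta> + 2 * \<delta>) (block a b)"
proof (cases "t < a + 2 ^ L")
  case True
  have "some_geodesic x p \<subseteq> nbhd (\<epsilon> + L * \<delta>) (block a t)"
    by (rule geodesic_short_block) (use True J t x in auto)
  then have "z \<in> nbhd (\<delta> + (\<epsilon> + L * \<delta>)) (block a t)"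
    using t(4) nbhd_mono[of \<delta> \<delta>] nbhd_nbhd by blast
  moreover have "nbhd (\<delta> + (\<epsilon> + L * \<delta>)) (block a t) \<subseteq> nbhd (\<epsilon> + L * \<delta> + 2 * \<delta>) (block a b)"
    using delta_nonneg t by (intro nbhd_block_mono) auto
  ultimately show ?thesis
    by blast
next
  case False
  define s where "s = t - 2 ^ L"
  have "(0::nat) < 2 ^ L"
    by simp
  then have s: "a \<le> s" "s < t" "s + 2 ^ L = t"
    using False unfolding s_def by arith+
  have "{s, Suc s} \<subseteq> {a..b}"
    using s(1,2) t(2) by auto
  then have "s \<in> J" "Suc s \<in> J"
    using J by auto
  then obtain q where q: "q \<in> X s" "q \<in> X (Suc s)"
    using chain unfolding quasi_convex_chain_def by blast
  have "z \<in> nbhd (\<epsilon> + L * \<delta> + 2 * \<delta>) (block (Suc s) t)"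
  proof (rule near_middle_geodesic[OF G \<open>z \<in> G\<close> first[OF s(1,2) q(1)] t(4)])
    show "some_geodesic q p \<subseteq> nbhd (\<epsilon> + L * \<delta>) (block (Suc s) t)"
      by (rule geodesic_short_block) (use q(2) t J s in auto)
    show "some_geodesic x q \<subseteq> nbhd (\<epsilon> + L * \<delta> + 2 * \<delta>) (block a s)"
      by (rule shorter) (use x q s t in auto)
    show "some_geodesic p y \<subseteq> nbhd (\<epsilon> + L * \<delta> + 2 * \<delta>) (block t b)"
      by (rule shorter) (use y t s in auto)
    show "2 * (\<epsilon> + L * \<delta> + 2 * \<delta>) + 4 * \<delta> < dist u v"
      if "u \<in> block a s" "v \<in> block t b" for u v
      by (rule blocks_far_apart[OF _ _ _ that]) (use J s t in auto)
  qed
  moreover have "nbhd (\<epsilon> + L * \<delta> + 2 * \<delta>) (block (Suc s) t) \<subseteq> nbhd (\<epsilon> + L * \<delta> + 2 * \<delta>) (block a b)"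
    using s t by (intro nbhd_block_mono) auto
  ultimately show ?thesis
    by blast
qed

lemma geodesic_near_block:
  assumes "{a..b} \<subseteq> J" "a \<le> b" "x \<in> X a" "y \<in> X b" "geodesic_segment_between G x y"
  shows "G \<subseteq> nbhd (\<epsilon> + L * \<delta> + 2 * \<delta>) (block a b)"
  using assms
proof (induction "b - a" arbitrary: a b x y G rule: less_induct)
  case less
  have shorter: "some_geodesic q q' \<subseteq> nbhd (\<epsilon> + L * \<delta> + 2 * \<delta>) (block i j)"
    if "a \<le> i" "i \<le> j" "j \<le> b" "j - i < b - a" "q \<in> X i" "q' \<in> X j" for i j q q'
  proof (rule less.hyps[OF that(4) _ that(2,5,6) geodesic_segment_some_geodesic])
    show "{i..j} \<subseteq> J"
      using less.prems(1) that(1,3) by auto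
  qed
  show ?case
  proof
    fix z assume "z \<in> G"
    show "z \<in> nbhd (\<epsilon> + L * \<delta> + 2 * \<delta>) (block a b)"
    proof (cases "z \<in> nbhd \<delta> (some_geodesic x y)")
      case True
      then obtain t where t: "a \<le> t" "t \<le> b" "\<exists>p\<in>X t. z \<in> nbhd \<delta> (some_geodesic x p)"
        and first: "\<And>s. a \<le> s \<Longrightarrow> s < t \<Longrightarrow> \<not> (\<exists>p\<in>X s. z \<in> nbhd \<delta> (some_geodesic x p))"
        using ex_least_nat_between[of "\<lambda>t. \<exists>p\<in>X t. z \<in> nbhd \<delta> (some_geodesic x p)" b a] less.prems(2,4)
        by blast
      then obtain p where p: "p \<in> X t" "z \<in> nbhd \<delta> (some_geodesic x p)"
        by blast
      show ?thesis
        using near_block_from_first_index[OF less.prems(1,3,4,5) \<open>z \<in> G\<close> t(1,2) p _ shorter] first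
        by blast
    next
      case False
      then have "dist z y \<le> \<delta>"
        using geodesic_near_some_geodesic_or_endpoint[OF less.prems(5)] \<open>z \<in> G\<close>
        unfolding nbhd_def by blast
      moreover have "\<delta> \<le> \<epsilon> + L * \<delta> + 2 * \<delta>"
        using delta_nonneg eps_nonneg by simp
      moreover have "y \<in> block a b"
        using less.prems(2,4) by auto
      ultimately show ?thesis
        unfolding nbhd_def by (blast intro: order.trans)
    qed
  qed
qed

lemma quasi_convex_UN_chain:
  assumes interval: "\<And>i j k. i \<in> J \<Longrightarrow> k \<in> J \<Longrightarrow> i \<le> j \<Longrightarrow> j \<le> k \<Longrightarrow> j \<in> J"
  shows "quasi_convex (\<epsilon> + L * \<delta> + 2 * \<delta>) (\<Union>i\<in>J. X i)"
  unfolding quasi_convex_def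
proof (intro ballI allI impI)
  fix x y G
  assume "x \<in> (\<Union>i\<in>J. X i)" "y \<in> (\<Union>i\<in>J. X i)" and G: "geodesic_segment_between G x y"
  then obtain i j where ij: "i \<in> J" "x \<in> X i" "j \<in> J" "y \<in> X j"
    by blast
  have near: "H \<subseteq> nbhd (\<epsilon> + L * \<delta> + 2 * \<delta>) (\<Union>i\<in>J. X i)"
    if "i \<in> J" "j \<in> J" "i \<le> j" "u \<in> X i" "v \<in> X j" "geodesic_segment_between H u v" for i j u v H
  proof -
    have "{i..j} \<subseteq> J"
      using interval[OF that(1,2)] by auto
    then have "H \<subseteq> nbhd (\<epsilon> + L * \<delta> + 2 * \<delta>) (block i j)"
      using geodesic_near_block that(3-6) by blast
    moreover have "block i j \<subseteq> (\<Union>i\<in>J. X i)"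
      using \<open>{i..j} \<subseteq> J\<close> by blast
    ultimately show ?thesis
      using nbhd_mono[of "\<epsilon> + L * \<delta> + 2 * \<delta>" "\<epsilon> + L * \<delta> + 2 * \<delta>"] by blast
  qed
  show "G \<subseteq> nbhd (\<epsilon> + L * \<delta> + 2 * \<delta>) (\<Union>i\<in>J. X i)"
  proof (cases "i \<le> j")
    case True
    then show ?thesis
      by (rule near[OF ij(1,3) _ ij(2,4) G])
  next
    case False
    then show ?thesis
      using near[OF ij(3,1) _ ij(4,2) geodesic_segment_between_reverse[OF G]] by simp
  qed
qed

end

theorem theoremA3:
  fixes \<delta> m \<epsilon> c :: real
  assumes "geodesic_space TYPE('a::metric_space)"
    and "hyperbolic \<delta> TYPE('a)"
    and "m > 0" and "\<epsilon> > 0" and "c \<ge> 0"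
  shows "\<exists>\<epsilon>'. \<forall>(I::nat set) (X::nat \<Rightarrow> 'a set).
           ((\<exists>\<Lambda>. I = {1..\<Lambda>}) \<or> I = {1..}) \<longrightarrow>
           (\<forall>i\<in>I. quasi_convex \<epsilon> (X i)) \<longrightarrow>
           (\<forall>i. i \<in> I \<and> i + 1 \<in> I \<longrightarrow> X i \<inter> X (i + 1) \<noteq> {}) \<longrightarrow>
           (\<forall>i\<in>I. \<forall>j\<in>I. \<forall>x\<in>X i. \<forall>y\<in>X j.
               dist x y \<ge> m * (\<bar>real i - real j\<bar> - c)) \<longrightarrow>
           quasi_convex \<epsilon>' (\<Union>i\<in>I. X i)"
proof -
  obtain L :: nat where "(2 * \<epsilon> + 8 * \<delta>) + (2 * \<delta>) * L < m * (2 ^ L - c)"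
    using ex_power_of_two_dominates_linear[OF \<open>m > 0\<close>] by blast
  then have L_large: "2 * (\<epsilon> + L * \<delta> + 2 * \<delta>) + 4 * \<delta> < m * (2 ^ L - c)"
    by (simp add: algebra_simps)
  show ?thesis
  proof (intro exI[of _ "\<epsilon> + L * \<delta> + 2 * \<delta>"] allI impI)
    fix I :: "nat set" and X :: "nat \<Rightarrow> 'a set"
    assume I: "(\<exists>\<Lambda>. I = {1..\<Lambda>}) \<or> I = {1..}"
      and qc: "\<forall>i\<in>I. quasi_convex \<epsilon> (X i)"
      and meet: "\<forall>i. i \<in> I \<and> i + 1 \<in> I \<longrightarrow> X i \<inter> X (i + 1) \<noteq> {}"
      and sep: "\<forall>i\<in>I. \<forall>j\<in>I. \<forall>x\<in>X i. \<forall>y\<in>X j. dist x y \<ge> m * (\<bar>real i - real j\<bar> - c)"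
    have "quasi_convex_chain \<epsilon> X I"
      using qc meet by (simp add: quasi_convex_chain_def)
    moreover have "separated_chain m c X I"
      using sep by (simp add: separated_chain_def)
    ultimately interpret separated_quasi_convex_chain \<delta> "TYPE('a)" \<epsilon> m c L I X
      using assms L_large by unfold_locales auto
    show "quasi_convex (\<epsilon> + L * \<delta> + 2 * \<delta>) (\<Union>i\<in>I. X i)"
      by (rule quasi_convex_UN_chain) (use I in auto)
  qed
qed

end
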